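(* Let $n>k\geq 3$ be odd integers and let $A$ be a cyclically $k$-diagonal $n\times n$ array. Let $E=\{e_1<e_2<\dots<e_t\}\subseteq[1,n]$, let $C=(1,\dots,1)\in\{-1,1\}^n$ and let $R=(r_1,\dots,r_n)\in\{-1,1\}^n$ with $r_i=-1$ if $i\in E$ and $r_i=1$ if $i\notin E$. Let $D_1=\{(d,d):d\in[1,n]\}$ be the main diagonal and let $F:D_1\to D_1$ send $(d,d)$ to the first cell of $D_1$ occurring in the sequence $CN_{RC}(d,d),CN_{RC}^2(d,d),\dots$. Define $\Theta(d)$ to be the element of $[1,n]$ congruent to $d-(k-1)$ modulo $n$, and (when $E\neq\emptyset$) $\Omega:E\to E$, $\Omega(e_s)=e_{s+(k-1)}$, subscripts read modulo $t$. Define $S_D:[1,n]\to[1,n]$ by $S_D(d)=\Theta(\Omega(d))$ if $d\in E$ and $S_D(d)=\Theta(d)$ otherwise. Then for every $d\in[1,n]$, $F(d,d)=(S_D(d),S_D(d))$.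
   Context: An $m\times n$ array is partially filled; $F(A)$ is its set of filled cells, every row and column contains at least one filled cell, and the array is toroidal (row indices mod $m$, column indices mod $n$). The row successor of $(i,j)\in F(A)$ is $s_R(i,j)=(i,j+t)$ with $t\ge1$ minimal such that this cell is filled; the column successor is $s_C(i,j)=(i+t,j)$ with $t\geq 1$ minimal such that it is filled; both are permutations of $F(A)$. For $R=(r_1,\dots,r_m)\in\{-1,1\}^m$, $C=(c_1,\dots,c_n)\in\{-1,1\}^n$, the Crazy Knight's move is $CN_{RC}(i,j)=s_C^{c_{j'}}(i,j')$ where $(i,j')=s_R^{r_i}(i,j)$. An $n\times n$ array is cyclically $k$-diagonal if its filled cells are exactly those $(i,j)$ with $i-j \bmod n\in\{0,1,\dots,k-1\}$ (the diagonals $D_1,\dots,D_k$, where $D_s=\{(s,1),(s+1,2),\dots,(s-1,n)\}$). *)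

theory Defs
  imports Main
begin

text \<open>Cells are pairs (row, column) of integers; row indices range over [1,m],
 column indices over [1,n]. Toroidal index reduction to the representative in [1,n].\<close>

definition wrap :: "int \<Rightarrow> int \<Rightarrow> int" where
  "wrap n x = (x - 1) mod n + 1"

definition row_succ :: "(int \<times> int) set \<Rightarrow> int \<Rightarrow> int \<times> int \<Rightarrow> int \<times> int" where
  "row_succ A n c = (case c of (i, j) \<Rightarrow>
     (i, wrap n (j + int (LEAST t::nat. t \<ge> 1 \<and> (i, wrap n (j + int t)) \<in> A))))"

definition col_succ :: "(int \<times> int) set \<Rightarrow> int \<Rightarrow> int \<times> int \<Rightarrow> int \<times> int" where
  "col_succ A m c = (case c of (i, j) \<Rightarrow>
     (wrap m (i + int (LEAST t::nat. t \<ge> 1 \<and> (wrap m (i + int t), j) \<in> A)), j))"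

definition perm_pow :: "('a \<Rightarrow> 'a) \<Rightarrow> 'a set \<Rightarrow> int \<Rightarrow> 'a \<Rightarrow> 'a" where
  "perm_pow f A r = (if r = 1 then f else the_inv_into A f)"

definition crazy_knight ::
  "(int \<times> int) set \<Rightarrow> int \<Rightarrow> int \<Rightarrow> (int \<Rightarrow> int) \<Rightarrow> (int \<Rightarrow> int) \<Rightarrow> int \<times> int \<Rightarrow> int \<times> int" where
  "crazy_knight A m n R C c = (case perm_pow (row_succ A n) A (R (fst c)) c of (i, j') \<Rightarrow>
     perm_pow (col_succ A m) A (C j') (i, j'))"

definition cyc_k_diag :: "int \<Rightarrow> int \<Rightarrow> (int \<times> int) set" where
  "cyc_k_diag n k = {(i, j). i \<in> {1..n} \<and> j \<in> {1..n} \<and> (i - j) mod n \<in> {0..k-1}}"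

definition main_diag :: "int \<Rightarrow> (int \<times> int) set" where
  "main_diag n = {(d, d) | d. d \<in> {1..n}}"

definition first_return :: "('a \<Rightarrow> 'a) \<Rightarrow> 'a set \<Rightarrow> 'a \<Rightarrow> 'a" where
  "first_return f D c = (f ^^ (LEAST s::nat. s \<ge> 1 \<and> (f ^^ s) c \<in> D)) c"

definition Theta :: "int \<Rightarrow> int \<Rightarrow> int \<Rightarrow> int" where
  "Theta n k d = wrap n (d - (k - 1))"

text \<open>Omega(e_s) = e_{s+(k-1)}, subscripts mod t, where E = {e_1 < ... < e_t}.
 The (0-based) position of x in E is the number of elements of E below x.\<close>

definition Omega :: "int set \<Rightarrow> int \<Rightarrow> int \<Rightarrow> int" where
  "Omega E k x = (let es = sorted_list_of_set E; t = length es;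
                      s = card {y \<in> E. y < x}
                  in es ! nat ((int s + (k - 1)) mod int t))"

definition S_D :: "int \<Rightarrow> int \<Rightarrow> int set \<Rightarrow> int \<Rightarrow> int" where
  "S_D n k E d = (if d \<in> E then Theta n k (Omega E k d) else Theta n k d)"

end

theory Submission
  imports Defs
begin

(* Write cell i d for the filled cell (i, i - d) of row i on the diagonal D_(d+1), 0 <= d < k.
   With C = (1,...,1) every move ends with a column step, so the knight descends one row per move.
   On a row outside E it steps right and then down: the offset d is kept, except that from D_1
   (d = 0) the knight lands on D_1 again, k - 1 rows higher. On a row of E it steps left and then
   down: the offset becomes (d + 2) mod k, except that from offset k - 2 the column step wraps
   round to D_1, again k - 1 rows higher.
   So from (d,d) with d outside E the knight returns at once to (Theta d, Theta d). From (d,d)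
   with d in E it moves to offset 2 in row d + 1, and from then on its offset changes only on
   rows of E, by 2 mod k. As k is odd, the offset first equals k - 2 after k - 2 further rows
   of E, that is, on the (k-1)-th row of E after d in cyclic order, which is Omega d; from there
   the knight jumps to (Theta (Omega d), Theta (Omega d)). *)

lemma wrap_in_range:
  assumes "0 < n" shows "wrap n x \<in> {1..n}"
  using pos_mod_bound[OF assms, of "x - 1"] pos_mod_sign[OF assms, of "x - 1"]
  unfolding wrap_def atLeastAtMost_iff by linarith

lemma wrap_mod [simp]: "wrap n x mod n = x mod n"
  unfolding wrap_def by (simp add: mod_add_left_eq)

lemma wrap_eq_iff: "wrap n x = wrap n y \<longleftrightarrow> x mod n = y mod n"
  unfolding wrap_def by (simp add: mod_eq_dvd_iff)

lemma wrap_id: "x \<in> {1..n} \<Longrightarrow> wrap n x = x"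
  unfolding wrap_def by simp

lemma mod_add_double_neq:
  fixes k x m :: int
  assumes "odd k" and "0 < m" and "m < k"
  shows "(x + 2 * m) mod k \<noteq> x mod k"
proof
  assume "(x + 2 * m) mod k = x mod k"
  then have "k dvd 2 * m" by (simp add: mod_eq_dvd_iff)
  then have "k dvd m" using assms(1) by (simp add: coprime_dvd_mult_right_iff)
  then show False using assms(2,3) zdvd_imp_le by fastforce
qed

(* As k is odd and m < k, the orbit of d under +2 mod k meets k - 2 only at step m, so its
   first step avoids 0. *)
lemma mod_add_two_step:
  fixes k d m :: int
  assumes "odd k" and "1 \<le> d" and "d \<le> k - 1" and "0 < m" and "m < k"
    and "(d + 2 * m) mod k = k - 2"
  shows "1 \<le> (d + 2) mod k" and "(d + 2) mod k \<le> k - 1"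
    and "((d + 2) mod k + 2 * (m - 1)) mod k = k - 2"
proof -
  have "d \<noteq> k - 2"
  proof
    assume "d = k - 2"
    have "d mod k = d" using assms(2,3) by (intro mod_pos_pos_trivial) simp_all
    then have "d mod k = k - 2" using \<open>d = k - 2\<close> by (rule trans)
    then have "(d + 2 * m) mod k = d mod k" by (simp only: assms(6))
    moreover have "(d + 2 * m) mod k \<noteq> d mod k"
      using assms(1,4,5) by (rule mod_add_double_neq)
    ultimately show False by contradiction
  qed
  then consider "d + 2 < k" | "d = k - 1" using assms(3) by linarith
  then have "(d + 2) mod k = (if d + 2 < k then d + 2 else 1)"
    using assms(2) by cases simp_all
  then show "1 \<le> (d + 2) mod k" and "(d + 2) mod k \<le> k - 1"
    using assms(2,3) by auto
  show "((d + 2) mod k + 2 * (m - 1)) mod k = k - 2"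
    unfolding mod_add_left_eq using assms(6) by (simp add: algebra_simps)
qed

lemma card_less_nth_strict_sorted:
  fixes xs :: "'a::linorder list"
  assumes "sorted_wrt (<) xs" and "j < length xs"
  shows "card {y \<in> set xs. y < xs ! j} = j"
proof -
  have less_iff: "xs ! a < xs ! j \<longleftrightarrow> a < j" if "a < length xs" for a
    using sorted_wrt_nth_less[OF assms(1)] assms(2) that
    by (metis less_asym linorder_neqE_nat)
  have "{y \<in> set xs. y < xs ! j} = (!) xs ` {..<j}"
  proof (intro set_eqI iffI)
    fix y assume "y \<in> {y \<in> set xs. y < xs ! j}"
    then obtain a where "a < length xs" "y = xs ! a" "xs ! a < xs ! j"
      by (auto simp: in_set_conv_nth)
    then show "y \<in> (!) xs ` {..<j}" using less_iff by auto
  next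
    fix y assume "y \<in> (!) xs ` {..<j}"
    then show "y \<in> {y \<in> set xs. y < xs ! j}" using assms(2) less_iff by auto
  qed
  moreover have "inj_on ((!) xs) {..<j}"
    using assms by (intro inj_on_nth) (auto simp: strict_sorted_iff)
  ultimately show ?thesis by (simp add: card_image)
qed

inductive first_hit :: "('a \<Rightarrow> 'a) \<Rightarrow> 'a set \<Rightarrow> 'a \<Rightarrow> 'a \<Rightarrow> bool" for f D where
  hit: "f c \<in> D \<Longrightarrow> first_hit f D c (f c)"
| pass: "f c \<notin> D \<Longrightarrow> first_hit f D (f c) v \<Longrightarrow> first_hit f D c v"

lemma first_hit_reaches: "first_hit f D c v \<Longrightarrow> \<exists>s. (f ^^ s) (f c) \<in> D"
proof (induction rule: first_hit.induct)
  case (hit c)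
  then show ?case by (metis funpow_0)
next
  case (pass c v)
  then obtain s where "(f ^^ s) (f (f c)) \<in> D" by blast
  then have "(f ^^ Suc s) (f c) \<in> D" by (simp only: funpow_Suc_right o_apply)
  then show ?case by blast
qed

lemma first_return_hit: "f c \<in> D \<Longrightarrow> first_return f D c = f c"
proof -
  assume "f c \<in> D"
  then have "(LEAST s::nat. 1 \<le> s \<and> (f ^^ s) c \<in> D) = 1"
    by (intro Least_equality) auto
  then show ?thesis by (simp add: first_return_def)
qed

lemma first_return_pass:
  assumes "f c \<notin> D" and "(f ^^ s) (f c) \<in> D"
  shows "first_return f D c = first_return f D (f c)"
proof -
  have "(LEAST s::nat. 1 \<le> s \<and> (f ^^ s) c \<in> D) = Suc (LEAST s. (f ^^ s) (f c) \<in> D)"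
    using assms(2) by (subst Least_Suc[of _ "Suc s"]) (simp_all add: funpow_swap1)
  moreover have "(\<lambda>s. (f ^^ s) (f c) \<in> D) = (\<lambda>s. 1 \<le> s \<and> (f ^^ s) (f c) \<in> D)"
    using assms(1) by (metis funpow_0 less_one not_le)
  ultimately show ?thesis
    by (simp add: first_return_def funpow_swap1)
qed

lemma first_return_eq_first_hit: "first_hit f D c v \<Longrightarrow> first_return f D c = v"
proof (induction rule: first_hit.induct)
  case (hit c)
  then show ?case by (rule first_return_hit)
next
  case (pass c v)
  have "first_hit f D c v" by (rule first_hit.pass[OF pass.hyps(1,2)])
  from first_hit_reaches[OF this] obtain s where "(f ^^ s) (f c) \<in> D" ..
  then have "first_return f D c = first_return f D (f c)"
    using pass.hyps(1) by (rule first_return_pass[rotated])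
  then show ?case using pass.IH by simp
qed

locale cyclic_row_set =
  fixes n :: int and E :: "int set"
  assumes n_pos: "0 < n" and E_subset: "E \<subseteq> {1..n}"
begin

definition dist_E :: "int \<Rightarrow> nat" where
  "dist_E i = (LEAST u. wrap n (i + int u) \<in> E)"

definition next_E :: "int \<Rightarrow> int" where
  "next_E i = wrap n (i + int (dist_E i))"

definition succ_E :: "int \<Rightarrow> int" where
  "succ_E e = next_E (e + 1)"

lemma dist_E_exists:
  assumes "E \<noteq> {}" shows "\<exists>u. wrap n (i + int u) \<in> E"
proof -
  obtain e where e: "e \<in> E" using assms by blast
  have "wrap n (i + int (nat ((e - i) mod n))) = wrap n e"
    using n_pos by (simp add: wrap_eq_iff mod_add_right_eq)
  also have "\<dots> = e" using e E_subset by (blast intro: wrap_id)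
  finally show ?thesis using e by metis
qed

lemma wrap_next_E [simp]: "wrap n (next_E i) = next_E i"
  unfolding next_E_def using wrap_in_range[OF n_pos] by (rule wrap_id)

lemma next_E_in_E: "E \<noteq> {} \<Longrightarrow> next_E i \<in> E"
  unfolding next_E_def dist_E_def by (rule LeastI_ex[OF dist_E_exists])

lemma not_in_E_before_next_E: "u < dist_E i \<Longrightarrow> wrap n (i + int u) \<notin> E"
  unfolding dist_E_def by (rule not_less_Least)

lemma next_E_eqI:
  assumes y: "y \<in> E" and least: "\<forall>z\<in>E. (y - a) mod n \<le> (z - a) mod n"
  shows "next_E a = y"
proof -
  define u where "u = nat ((y - a) mod n)"
  have u: "int u = (y - a) mod n" using n_pos unfolding u_def by simp
  have wrap_u: "wrap n (a + int u) = y"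
  proof -
    have "wrap n (a + int u) = wrap n y"
      unfolding wrap_eq_iff u by (simp add: mod_add_right_eq)
    also have "\<dots> = y" using y E_subset by (blast intro: wrap_id)
    finally show ?thesis .
  qed
  have "dist_E a = u"
    unfolding dist_E_def
  proof (rule Least_equality)
    show "wrap n (a + int u) \<in> E" using wrap_u y by simp
  next
    fix u' assume "wrap n (a + int u') \<in> E"
    then have "(y - a) mod n \<le> (wrap n (a + int u') - a) mod n" by (rule least[rule_format])
    also have "\<dots> = int u' mod n" using mod_diff_cong[OF wrap_mod refl, of n "a + int u'" a] by simp
    also have "\<dots> \<le> int u'" by (simp add: zmod_le_nonneg_dividend)
    finally show "u \<le> u'" using u by simp
  qed
  then show ?thesis using wrap_u unfolding next_E_def by simp
qed

abbreviation es :: "int list" where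
  "es \<equiv> sorted_list_of_set E"

lemma set_es: "set es = E"
  using finite_subset[OF E_subset] by simp

lemma es_sorted: "sorted_wrt (<) es"
  by (rule strict_sorted_list_of_set)

lemma nth_es_in_E: "l < length es \<Longrightarrow> es ! l \<in> E"
  using set_es nth_mem by blast

lemma nth_es_mono: "l \<le> l' \<Longrightarrow> l' < length es \<Longrightarrow> es ! l \<le> es ! l'"
  using sorted_nth_mono[OF strict_sorted_imp_sorted[OF es_sorted]] .

lemma diff_succ_mod_eq:
  assumes "x \<in> {1..n}" and "z \<in> {1..n}"
  shows "(z - (x + 1)) mod n = (if x < z then z - x - 1 else z - x - 1 + n)"
proof (cases "x < z")
  case False
  have "(z - (x + 1)) mod n = (z - (x + 1) + n) mod n" by simp
  also have "\<dots> = z - (x + 1) + n" using False assms by (intro mod_pos_pos_trivial) auto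
  finally show ?thesis using False by simp
qed (use assms in auto)

lemma succ_E_nth:
  assumes j: "j < length es"
  shows "succ_E (es ! j) = es ! (Suc j mod length es)"
  unfolding succ_E_def
proof (rule next_E_eqI)
  let ?x = "es ! j" and ?y = "es ! (Suc j mod length es)"
  have in_range: "es ! l \<in> {1..n}" if "l < length es" for l
    using nth_es_in_E[OF that] E_subset by blast
  show "?y \<in> E" using j by (simp add: nth_es_in_E)
  show "\<forall>z\<in>E. (?y - (?x + 1)) mod n \<le> (z - (?x + 1)) mod n"
  proof
    fix z assume "z \<in> E"
    then obtain l where l: "l < length es" "z = es ! l"
      using set_es by (metis in_set_conv_nth)
    have x_z: "?x < z \<Longrightarrow> Suc j \<le> l"
      using nth_es_mono[of l j] j l by (meson not_less_eq_eq not_le)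
    show "(?y - (?x + 1)) mod n \<le> (z - (?x + 1)) mod n"
    proof (cases "Suc j < length es")
      case True
      then have "?x < ?y" using sorted_wrt_nth_less[OF es_sorted] by simp
      moreover have "?x < z \<Longrightarrow> ?y \<le> z" using x_z nth_es_mono l True by simp
      ultimately show ?thesis
        using in_range[OF j] in_range[OF True] in_range[OF l(1)] l(2) True
        by (cases "?x < z") (simp_all add: diff_succ_mod_eq)
    next
      case False
      then have "Suc j = length es" using j by simp
      then have "\<not> ?x < z" "\<not> ?x < ?y" "?y \<le> z"
        using x_z nth_es_mono[of 0 l] nth_es_mono[of 0 j] l j by auto
      then show ?thesis
        using in_range[OF j] in_range[of 0] in_range[OF l(1)] l j \<open>Suc j = length es\<close>
        by (simp add: diff_succ_mod_eq)
    qed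
  qed
qed

lemma succ_E_pow_nth:
  assumes "j < length es"
  shows "(succ_E ^^ m) (es ! j) = es ! ((j + m) mod length es)"
proof (induction m)
  case 0
  then show ?case using assms by simp
next
  case (Suc m)
  have "(succ_E ^^ Suc m) (es ! j) = succ_E (es ! ((j + m) mod length es))"
    using Suc by simp
  also have "\<dots> = es ! (Suc ((j + m) mod length es) mod length es)"
    using assms by (simp add: succ_E_nth)
  also have "\<dots> = es ! ((j + Suc m) mod length es)"
    by (simp add: mod_Suc_eq)
  finally show ?case .
qed

lemma Omega_eq_succ_E_pow:
  assumes "1 \<le> k" and "x \<in> E"
  shows "Omega E k x = (succ_E ^^ nat (k - 1)) x"
proof -
  obtain j where j: "j < length es" "x = es ! j"
    using assms(2) set_es by (metis in_set_conv_nth)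
  have "card {y \<in> E. y < x} = j"
    using card_less_nth_strict_sorted[OF es_sorted j(1)] j(2) set_es by simp
  moreover have "(int j + (k - 1)) mod int (length es) = int ((j + nat (k - 1)) mod length es)"
    using assms(1) by (simp add: zmod_int)
  ultimately have "Omega E k x = es ! ((j + nat (k - 1)) mod length es)"
    unfolding Omega_def Let_def by (simp only: nat_int)
  also have "\<dots> = (succ_E ^^ nat (k - 1)) x"
    using succ_E_pow_nth[OF j(1)] j(2) by simp
  finally show ?thesis .
qed

end

locale cyclic_diagonal_array =
  fixes n k :: int
  assumes k_pos: "0 < k" and k_less_n: "k < n"
begin

abbreviation A :: "(int \<times> int) set" where
  "A \<equiv> cyc_k_diag n k"

(* The cell of row i on the diagonal D_(d+1); both indices are read mod n. *)
definition cell :: "int \<Rightarrow> int \<Rightarrow> int \<times> int" where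
  "cell i d = (wrap n i, wrap n (i - d))"

lemma n_pos: "0 < n"
  using k_pos k_less_n by simp

lemma fst_cell [simp]: "fst (cell i d) = wrap n i"
  by (simp add: cell_def)

lemma cell_eq_iff: "cell i d = cell i' d' \<longleftrightarrow> i mod n = i' mod n \<and> d mod n = d' mod n"
  unfolding cell_def prod.inject wrap_eq_iff
proof (intro conj_cong refl)
  assume "i mod n = i' mod n"
  then have "n dvd i - i'" by (simp add: mod_eq_dvd_iff)
  have split: "(i - d) - (i' - d') = (i - i') + (d' - d)" by simp
  show "(i - d) mod n = (i' - d') mod n \<longleftrightarrow> d mod n = d' mod n"
    unfolding mod_eq_dvd_iff split dvd_add_right_iff[OF \<open>n dvd i - i'\<close>]
    by (rule dvd_diff_commute)
qed

lemma cell_in_A_iff: "cell i d \<in> A \<longleftrightarrow> d mod n \<le> k - 1"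
proof -
  have "(wrap n i - wrap n (i - d)) mod n = (i - (i - d)) mod n"
    by (rule mod_diff_cong) simp_all
  then show ?thesis
    using wrap_in_range[OF n_pos] n_pos unfolding cell_def cyc_k_diag_def by auto
qed

lemma cell_in_main_diag_iff: "cell i d \<in> main_diag n \<longleftrightarrow> d mod n = 0"
proof -
  have "cell i d \<in> main_diag n \<longleftrightarrow> wrap n i = wrap n (i - d)"
    using wrap_in_range[OF n_pos] by (auto simp: cell_def main_diag_def)
  also have "\<dots> \<longleftrightarrow> d mod n = 0"
    by (simp add: wrap_eq_iff mod_eq_dvd_iff dvd_eq_mod_eq_0[symmetric])
  finally show ?thesis .
qed

lemma A_cases:
  assumes "c \<in> A"
  obtains i d where "0 \<le> d" "d \<le> k - 1" "c = cell i d"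
proof -
  obtain i j where c: "c = (i, j)" "i \<in> {1..n}" "j \<in> {1..n}" "(i - j) mod n \<in> {0..k - 1}"
    using assms unfolding cyc_k_diag_def by blast
  have "(i - (i - j) mod n) mod n = j mod n"
    using mod_diff_right_eq[of i "i - j" n] by simp
  then have "cell i ((i - j) mod n) = c"
    using c wrap_id[of i n] wrap_id[of j n] by (simp add: cell_def wrap_eq_iff[of n _ j, symmetric])
  then show ?thesis using that c(4) by fastforce
qed

lemma mod_le_reflect_iff: "(k - 1 - x) mod n \<le> k - 1 \<longleftrightarrow> x mod n \<le> k - 1"
proof -
  have reduce: "(k - 1 - x) mod n = (k - 1 - x mod n) mod n"
    by (simp add: mod_diff_right_eq)
  have "0 \<le> x mod n" "x mod n < n" using n_pos by simp_all
  then consider "x mod n \<le> k - 1" | "k - 1 < x mod n" by linarith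
  then show ?thesis
  proof cases
    case 1
    then have "(k - 1 - x mod n) mod n = k - 1 - x mod n"
      using k_less_n \<open>0 \<le> x mod n\<close> by (intro mod_pos_pos_trivial) auto
    then show ?thesis using 1 reduce \<open>0 \<le> x mod n\<close> by simp
  next
    case 2
    have "(k - 1 - x mod n) mod n = (k - 1 - x mod n + n) mod n" by simp
    also have "\<dots> = k - 1 - x mod n + n"
      using 2 \<open>x mod n < n\<close> k_pos by (intro mod_pos_pos_trivial) auto
    finally show ?thesis using 2 reduce \<open>x mod n < n\<close> by simp
  qed
qed

lemma Least_add_mod_le:
  assumes "0 \<le> d" and "d \<le> k - 1"
  shows "(LEAST t::nat. 1 \<le> t \<and> (d + int t) mod n \<le> k - 1)
    = (if d < k - 1 then 1 else nat (n - k + 1))"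
proof (cases "d < k - 1")
  case True
  have "(d + 1) mod n = d + 1" using True assms k_less_n by (intro mod_pos_pos_trivial) auto
  then show ?thesis using True by (intro Least_equality) auto
next
  case False
  then have d: "d = k - 1" using assms by simp
  show ?thesis
  proof (simp only: False if_False, rule Least_equality)
    show "1 \<le> nat (n - k + 1) \<and> (d + int (nat (n - k + 1))) mod n \<le> k - 1"
      using d k_pos k_less_n by simp
  next
    fix t :: nat assume t: "1 \<le> t \<and> (d + int t) mod n \<le> k - 1"
    show "nat (n - k + 1) \<le> t"
    proof (rule ccontr)
      assume "\<not> nat (n - k + 1) \<le> t"
      then have "(d + int t) mod n = d + int t" using d k_pos by (intro mod_pos_pos_trivial) auto
      then show False using t d by linarith
    qed
  qed
qed

lemma row_succ_cell:
  assumes "0 \<le> d" and "d \<le> k - 1"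
  shows "row_succ A n (cell i d) = cell i ((d - 1) mod k)"
proof -
  have shift: "(wrap n i, wrap n (wrap n (i - d) + int t)) = cell i (d - int t)" for t
  proof -
    have "(wrap n (i - d) + int t) mod n = (i - d + int t) mod n" by (rule mod_add_cong) simp_all
    then show ?thesis by (simp add: cell_def wrap_eq_iff algebra_simps)
  qed
  have band: "cell i (d - int t) \<in> A \<longleftrightarrow> (k - 1 - d + int t) mod n \<le> k - 1" for t
    using mod_le_reflect_iff[of "d - int t"] by (simp add: cell_in_A_iff algebra_simps)
  have "row_succ A n (cell i d) = cell i (d - int (LEAST t::nat. 1 \<le> t \<and> cell i (d - int t) \<in> A))"
    by (simp add: row_succ_def cell_def[of i d] shift)
  also have "\<dots> = cell i (d - int (if 0 < d then 1 else nat (n - k + 1)))"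
    using Least_add_mod_le[of "k - 1 - d"] assms by (simp add: band)
  also have "\<dots> = cell i ((d - 1) mod k)"
    using assms k_less_n by (auto simp: cell_eq_iff mod_eq_dvd_iff zmod_minus1[OF k_pos])
  finally show ?thesis .
qed

lemma col_succ_cell:
  assumes "0 \<le> d" and "d \<le> k - 1"
  shows "col_succ A n (cell i d) = (if d < k - 1 then cell (i + 1) (d + 1) else cell (i - k + 1) 0)"
proof -
  have shift: "(wrap n (wrap n i + int t), wrap n (i - d)) = cell (i + int t) (d + int t)" for t
  proof -
    have "(wrap n i + int t) mod n = (i + int t) mod n" by (rule mod_add_cong) simp_all
    then show ?thesis by (simp add: cell_def wrap_eq_iff)
  qed
  have "col_succ A n (cell i d) = cell (i + int (LEAST t::nat. 1 \<le> t \<and> cell (i + int t) (d + int t) \<in> A))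
      (d + int (LEAST t::nat. 1 \<le> t \<and> cell (i + int t) (d + int t) \<in> A))"
    by (simp add: col_succ_def cell_def[of i d] shift)
  also have "\<dots> = (if d < k - 1 then cell (i + 1) (d + 1)
      else cell (i + (n - k + 1)) (d + (n - k + 1)))"
    using Least_add_mod_le[OF assms] k_less_n by (simp add: cell_in_A_iff)
  also have "\<dots> = (if d < k - 1 then cell (i + 1) (d + 1) else cell (i - k + 1) 0)"
  proof (cases "d < k - 1")
    case False
    then have "d = k - 1" using assms by simp
    then show ?thesis using False by (simp add: cell_eq_iff mod_eq_dvd_iff)
  qed simp
  finally show ?thesis .
qed

lemma inj_on_row_succ: "inj_on (row_succ A n) A"
proof (rule inj_onI)
  fix x y assume "x \<in> A" "y \<in> A" and eq: "row_succ A n x = row_succ A n y"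
  obtain i d where x: "0 \<le> d" "d \<le> k - 1" "x = cell i d" using \<open>x \<in> A\<close> by (rule A_cases)
  obtain i' d' where y: "0 \<le> d'" "d' \<le> k - 1" "y = cell i' d'" using \<open>y \<in> A\<close> by (rule A_cases)
  have "cell i ((d - 1) mod k) = cell i' ((d' - 1) mod k)"
    using eq x y by (simp add: row_succ_cell)
  moreover have "(d - 1) mod k < n" "(d' - 1) mod k < n"
    using k_pos k_less_n by (simp_all add: less_trans[OF pos_mod_bound])
  ultimately have i: "i mod n = i' mod n" and "(d - 1) mod k = (d' - 1) mod k"
    using k_pos by (simp_all add: cell_eq_iff)
  then have "(d - 1 + 1) mod k = (d' - 1 + 1) mod k" by (intro mod_add_cong) simp_all
  then have "d = d'" using x y by simp
  then show "x = y" using x y i by (simp add: cell_eq_iff)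
qed

lemma row_pred_cell:
  assumes "0 \<le> d" and "d \<le> k - 1"
  shows "the_inv_into A (row_succ A n) (cell i d) = cell i ((d + 1) mod k)"
proof (rule the_inv_into_f_eq[OF inj_on_row_succ])
  have "0 \<le> (d + 1) mod k" "(d + 1) mod k \<le> k - 1" using k_pos by simp_all
  moreover have "((d + 1) mod k - 1) mod k = d"
    using assms by (simp add: mod_diff_left_eq)
  ultimately show "row_succ A n (cell i ((d + 1) mod k)) = cell i d"
    by (simp add: row_succ_cell)
  show "cell i ((d + 1) mod k) \<in> A"
    using \<open>0 \<le> (d + 1) mod k\<close> \<open>(d + 1) mod k \<le> k - 1\<close> k_less_n by (simp add: cell_in_A_iff)
qed

end

locale crazy_knight_walk = cyclic_diagonal_array n k + cyclic_row_set n E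
  for n k :: int and E :: "int set" +
  fixes R C :: "int \<Rightarrow> int"
  assumes C_eq: "\<forall>j. C j = 1"
    and R_eq: "\<forall>i. R i = (if i \<in> E then -1 else 1)"
begin

abbreviation K :: "int \<times> int \<Rightarrow> int \<times> int" where
  "K \<equiv> crazy_knight A n n R C"

lemma knight_eq: "K c = col_succ A n (perm_pow (row_succ A n) A (R (fst c)) c)"
  unfolding crazy_knight_def
  by (cases "perm_pow (row_succ A n) A (R (fst c)) c") (simp add: perm_pow_def C_eq)

lemma knight_cell_off_E:
  assumes "wrap n i \<notin> E" and "0 \<le> d" and "d \<le> k - 1"
  shows "K (cell i d) = (if d = 0 then cell (i - k + 1) 0 else cell (i + 1) d)"
proof -
  have "K (cell i d) = col_succ A n (cell i ((d - 1) mod k))"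
    using assms by (simp add: knight_eq R_eq perm_pow_def row_succ_cell)
  then show ?thesis
    using assms k_pos by (simp add: col_succ_cell zmod_minus1)
qed

lemma knight_cell_on_E:
  assumes "wrap n i \<in> E" and "0 \<le> d" and "d \<le> k - 1"
  shows "K (cell i d)
    = (if (d + 2) mod k = 0 then cell (i - k + 1) 0 else cell (i + 1) ((d + 2) mod k))"
proof -
  define d' where "d' = (d + 1) mod k"
  have d': "0 \<le> d'" "d' \<le> k - 1" using k_pos unfolding d'_def by simp_all
  have d'_succ: "(d + 2) mod k = (d' + 1) mod k"
    unfolding d'_def mod_add_left_eq by (simp add: add.commute)
  have "K (cell i d) = col_succ A n (cell i d')"
    using assms by (simp add: knight_eq R_eq perm_pow_def row_pred_cell d'_def)
  also have "\<dots> = (if d' < k - 1 then cell (i + 1) (d' + 1) else cell (i - k + 1) 0)"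
    using d' by (rule col_succ_cell)
  moreover have "(d' + 1) mod k = (if d' < k - 1 then d' + 1 else 0)"
  proof (cases "d' < k - 1")
    case False
    then have "d' = k - 1" using d' by simp
    then show ?thesis by simp
  qed (use d' in simp)
  ultimately show ?thesis using d' by (simp add: d'_succ)
qed

lemma cell_off_main_diag: "1 \<le> d \<Longrightarrow> d \<le> k - 1 \<Longrightarrow> cell i d \<notin> main_diag n"
  using k_less_n by (simp add: cell_in_main_diag_iff)

lemma first_hit_descend_off_E:
  assumes "1 \<le> d" and "d \<le> k - 1"
    and "\<forall>u<m. wrap n (i + int u) \<notin> E"
    and "first_hit K (main_diag n) (cell (i + int m) d) v"
  shows "first_hit K (main_diag n) (cell i d) v"
  using assms(3,4)
proof (induction m arbitrary: i)
  case 0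
  then show ?case by simp
next
  case (Suc m)
  have "K (cell i d) = cell (i + 1) d"
    using Suc.prems(1) knight_cell_off_E[of i d] assms(1,2) by fastforce
  moreover have "first_hit K (main_diag n) (cell (i + 1) d) v"
  proof (rule Suc.IH)
    show "\<forall>u<m. wrap n (i + 1 + int u) \<notin> E"
      using Suc.prems(1) by (auto simp: add.assoc)
    show "first_hit K (main_diag n) (cell (i + 1 + int m) d) v"
      using Suc.prems(2) by (simp add: add.assoc)
  qed
  ultimately show ?case
    using cell_off_main_diag[OF assms(1,2)] by (auto intro: first_hit.pass)
qed

lemma first_hit_via_next_E:
  assumes "1 \<le> d" and "d \<le> k - 1"
    and "first_hit K (main_diag n) (cell (next_E i) d) v"
  shows "first_hit K (main_diag n) (cell i d) v"
proof (rule first_hit_descend_off_E[OF assms(1,2)])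
  show "\<forall>u<dist_E i. wrap n (i + int u) \<notin> E"
    using not_in_E_before_next_E by blast
  have "cell (i + int (dist_E i)) d = cell (next_E i) d"
    unfolding next_E_def by (simp add: cell_eq_iff)
  then show "first_hit K (main_diag n) (cell (i + int (dist_E i)) d) v"
    using assms(3) by simp
qed

(* The offset advances by 2 mod k on each row of E and the knight leaves for D_1 from offset
   k - 2, so r counts the rows of E still to be crossed after the first one reached. *)
lemma first_hit_from_offset:
  assumes "odd k" and "E \<noteq> {}"
    and "1 \<le> d" and "d \<le> k - 1" and "int r < k" and "(d + 2 * int r) mod k = k - 2"
  shows "first_hit K (main_diag n) (cell i d) (cell ((succ_E ^^ r) (next_E i) - k + 1) 0)"
  using assms(3-)
proof (induction r arbitrary: i d)
  case 0
  let ?e = "next_E i"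
  have "d = k - 2" using 0 by simp
  then have exit: "K (cell ?e d) = cell (?e - k + 1) 0"
    using knight_cell_on_E[of ?e d] next_E_in_E[OF assms(2)] 0 by simp
  have "K (cell ?e d) \<in> main_diag n"
    unfolding exit by (simp add: cell_in_main_diag_iff)
  then have "first_hit K (main_diag n) (cell ?e d) (cell (?e - k + 1) 0)"
    unfolding exit[symmetric] by (rule first_hit.hit)
  with "0.prems"(1,2) have "first_hit K (main_diag n) (cell i d) (cell (?e - k + 1) 0)"
    by (rule first_hit_via_next_E)
  then show ?case by simp
next
  case (Suc r)
  let ?e = "next_E i" and ?d' = "(d + 2) mod k"
  have d': "1 \<le> ?d'" "?d' \<le> k - 1" and invariant: "(?d' + 2 * int r) mod k = k - 2"
    using mod_add_two_step[OF assms(1) Suc.prems(1,2), of "int (Suc r)"] Suc.prems(3,4) by simp_all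
  have step: "K (cell ?e d) = cell (?e + 1) ?d'"
    using knight_cell_on_E[of ?e d] next_E_in_E[OF assms(2)] Suc.prems(1,2) d' by simp
  have "first_hit K (main_diag n) (cell (?e + 1) ?d')
      (cell ((succ_E ^^ r) (next_E (?e + 1)) - k + 1) 0)"
    using Suc.IH d' invariant Suc.prems(3) by simp
  moreover have "(succ_E ^^ r) (next_E (?e + 1)) = (succ_E ^^ Suc r) ?e"
    unfolding succ_E_def[symmetric] funpow_Suc_right by simp
  ultimately have "first_hit K (main_diag n) (K (cell ?e d)) (cell ((succ_E ^^ Suc r) ?e - k + 1) 0)"
    by (simp only: step)
  moreover have "K (cell ?e d) \<notin> main_diag n"
    unfolding step by (rule cell_off_main_diag[OF d'])
  ultimately have "first_hit K (main_diag n) (cell ?e d) (cell ((succ_E ^^ Suc r) ?e - k + 1) 0)"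
    by (blast intro: first_hit.pass)
  with Suc.prems(1,2) show ?case
    by (rule first_hit_via_next_E)
qed

lemma first_hit_from_main_diag_off_E:
  assumes "d \<in> {1..n}" and "d \<notin> E"
  shows "first_hit K (main_diag n) (cell d 0) (cell (Theta n k d) 0)"
proof -
  have "K (cell d 0) = cell (d - k + 1) 0"
    using knight_cell_off_E[of d 0] assms wrap_id k_pos by simp
  moreover have "cell (d - k + 1) 0 = cell (Theta n k d) 0"
    by (simp add: Theta_def cell_eq_iff algebra_simps)
  ultimately show ?thesis
    using first_hit.hit[of K "cell d 0" "main_diag n"] by (simp add: cell_in_main_diag_iff)
qed

lemma first_hit_from_main_diag_on_E:
  assumes "odd k" and "3 \<le> k" and "d \<in> E"
  shows "first_hit K (main_diag n) (cell d 0) (cell (Theta n k (Omega E k d)) 0)"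
proof -
  have step: "K (cell d 0) = cell (d + 1) 2"
    using knight_cell_on_E[of d 0] assms(2,3) E_subset wrap_id by auto
  have "(2 + 2 * int (nat (k - 2))) mod k = ((k - 2) + k) mod k"
    using assms(2) by simp
  also have "\<dots> = k - 2"
    using assms(2) by (simp only: mod_add_self2) (rule mod_pos_pos_trivial; simp)
  finally have "first_hit K (main_diag n) (cell (d + 1) 2)
      (cell ((succ_E ^^ nat (k - 2)) (next_E (d + 1)) - k + 1) 0)"
    using assms by (intro first_hit_from_offset) auto
  moreover have "(succ_E ^^ nat (k - 2)) (next_E (d + 1)) = Omega E k d"
  proof -
    have "nat (k - 1) = Suc (nat (k - 2))" using assms(2) by simp
    then show ?thesis
      using Omega_eq_succ_E_pow[of k d] assms(2,3)
      by (simp add: succ_E_def[symmetric] funpow_Suc_right del: funpow.simps)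
  qed
  moreover have "cell (Omega E k d - k + 1) 0 = cell (Theta n k (Omega E k d)) 0"
    by (simp add: Theta_def cell_eq_iff algebra_simps)
  moreover have "K (cell d 0) \<notin> main_diag n"
    using step assms(2) k_less_n by (simp add: cell_in_main_diag_iff)
  ultimately show ?thesis
    using step by (auto intro: first_hit.pass)
qed

lemma first_return_from_main_diag:
  assumes "odd k" and "3 \<le> k" and "d \<in> {1..n}"
  shows "first_return K (main_diag n) (d, d) = (S_D n k E d, S_D n k E d)"
proof -
  have "first_hit K (main_diag n) (cell d 0) (cell (S_D n k E d) 0)"
    unfolding S_D_def
    using first_hit_from_main_diag_on_E[OF assms(1,2)] first_hit_from_main_diag_off_E[OF assms(3)]
    by simp
  then have "first_return K (main_diag n) (cell d 0) = cell (S_D n k E d) 0"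
    by (rule first_return_eq_first_hit)
  moreover have "S_D n k E d \<in> {1..n}"
    using wrap_in_range[OF n_pos] by (simp add: S_D_def Theta_def)
  ultimately show ?thesis
    using assms(3) by (simp add: cell_def wrap_id)
qed

end

theorem proposition3p1:
  fixes n k :: int and E :: "int set" and R C :: "int \<Rightarrow> int"
  assumes "odd n" and "odd k" and "n > k" and "k \<ge> 3"
    and "E \<subseteq> {1..n}"
    and "\<forall>j. C j = 1"
    and "\<forall>i. R i = (if i \<in> E then -1 else 1)"
  shows "\<forall>d \<in> {1..n}.
     first_return (crazy_knight (cyc_k_diag n k) n n R C) (main_diag n) (d, d)
       = (S_D n k E d, S_D n k E d)"
proof -
  interpret crazy_knight_walk n k E R C
    using assms by unfold_locales auto
  show ?thesis
    using first_return_from_main_diag assms(2,4) by blast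
qed

end
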